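(* Assume every node of $G$ belongs to at least one $h$-clique, and let $f^*$ be any maximum flow in $\mathcal{H}$. For an independent component set $\mathcal{C}$ define $g(\mathcal{C})=\mathcal{C}\cup des(\mathcal{C})$. Then $g$ is a bijection from the family of independent component sets onto the family of d-closed component sets.
   Context: Let $G=(V,E)$ be a finite simple undirected graph and $h\ge2$. An $h$-clique is a set of $h$ pairwise adjacent nodes; $\mu_h(G[W])$ counts $h$-cliques inside $W$; for nonempty $W$, $\rho_h(W)=\mu_h(G[W])/|W|$; $\rho_h^*=\max_{\emptyset\ne W\subseteq V}\rho_h(W)$; $deg_G(v,h)$ is the number of $h$-cliques containing $v$; $\Lambda$ is the set of $(h-1)$-cliques of $G$ contained in some $h$-clique. Flow network $\mathcal{H}=(V_\mathcal{H},E_\mathcal{H},c)$: $V_\mathcal{H}=V\cup\Lambda\cup\{s,t\}$; for $v\in V$: arcs $(s,v)$ cap. $deg_G(v,h)$, $(v,t)$ cap. $h\rho_h^*$, $(v,s),(t,v)$ cap. $0$; for $\lambda\in\Lambda$, $v\in\lambda$: $(\lambda,v)$ cap. $+\infty$, $(v,\lambda)$ cap. $0$; for $\lambda\in\Lambda$, $v\in V$ with $\lambda\cup\{v\}$ an $h$-clique: $(v,\lambda)$ cap. $1$, $(\lambda,v)$ cap. $0$; no other arcs. A flow $f$ satisfies $f(u,v)\le c(u,v)$, $f(v,u)=-f(u,v)$, conservation at nodes other than $s,t$. The residual graph $\mathcal{H}_{f}$ has an arc $(u,v)$ whenever $(u,v)\in E_\mathcal{H}$ and $c(u,v)-f(u,v)>0$.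 The condensation $\mathcal{H}^C$ has the SCCs of $\mathcal{H}_{f^*}$ as nodes, with an arc $C\to C'$ ($C\ne C'$) whenever $\mathcal{H}_{f^*}$ has an arc from a node of $C$ to a node of $C'$. A non-trivial component is an SCC containing neither $s$ nor $t$. For a non-trivial component $C$, $des(C)$ (resp. $anc(C)$) is the set of non-trivial components $C'$ such that $\mathcal{H}^C$ has a directed path of length $\ge1$ from $C$ to $C'$ (resp. from $C'$ to $C$); for a set $\mathcal{C}$, $des(\mathcal{C})=\bigcup_{C\in\mathcal{C}}des(C)$. An independent component set is a set $\mathcal{C}$ of non-trivial components with $C\cap V\neq\emptyset$ for all $C\in\mathcal{C}$ and $C_1\notin des(C_2)$ for all $C_1,C_2\in\mathcal{C}$. A d-closed component set is a set $\mathcal{C}$ of non-trivial components such that every $C\in\mathcal{C}$ with $C\cap V=\emptyset$ has an incoming arc in $\mathcal{H}^C$ from some $C'\in\mathcal{C}$, and $des(\mathcal{C})\subseteq\mathcal{C}$. *)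

theory Defs
  imports Main "HOL-Library.Extended_Real"
begin

definition simple_graph :: "'v set \<Rightarrow> 'v set set \<Rightarrow> bool" where
  "simple_graph V E \<longleftrightarrow> finite V \<and> E \<subseteq> {{u, w} | u w. u \<in> V \<and> w \<in> V \<and> u \<noteq> w}"

definition is_hclique :: "'v set \<Rightarrow> 'v set set \<Rightarrow> nat \<Rightarrow> 'v set \<Rightarrow> bool" where
  "is_hclique V E h K \<longleftrightarrow> K \<subseteq> V \<and> finite K \<and> card K = h \<and>
     (\<forall>u\<in>K. \<forall>w\<in>K. u \<noteq> w \<longrightarrow> {u, w} \<in> E)"

definition mu :: "'v set \<Rightarrow> 'v set set \<Rightarrow> nat \<Rightarrow> 'v set \<Rightarrow> nat" where
  "mu V E h W = card {K. is_hclique V E h K \<and> K \<subseteq> W}"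

definition rho :: "'v set \<Rightarrow> 'v set set \<Rightarrow> nat \<Rightarrow> 'v set \<Rightarrow> real" where
  "rho V E h W = real (mu V E h W) / real (card W)"

definition rho_star :: "'v set \<Rightarrow> 'v set set \<Rightarrow> nat \<Rightarrow> real" where
  "rho_star V E h = Max {rho V E h W | W. W \<noteq> {} \<and> W \<subseteq> V}"

definition cdeg :: "'v set \<Rightarrow> 'v set set \<Rightarrow> nat \<Rightarrow> 'v \<Rightarrow> nat" where
  "cdeg V E h v = card {K. is_hclique V E h K \<and> v \<in> K}"

definition Lambda :: "'v set \<Rightarrow> 'v set set \<Rightarrow> nat \<Rightarrow> 'v set set" where
  "Lambda V E h = {L. is_hclique V E (h - 1) L \<and> (\<exists>K. is_hclique V E h K \<and> L \<subseteq> K)}"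

datatype 'v node = Src | Snk | Vert 'v | Lam "'v set"

definition VH :: "'v set \<Rightarrow> 'v set set \<Rightarrow> nat \<Rightarrow> 'v node set" where
  "VH V E h = {Src, Snk} \<union> Vert ` V \<union> Lam ` Lambda V E h"

definition EH :: "'v set \<Rightarrow> 'v set set \<Rightarrow> nat \<Rightarrow> ('v node \<times> 'v node) set" where
  "EH V E h =
     {(Src, Vert v) | v. v \<in> V} \<union> {(Vert v, Snk) | v. v \<in> V} \<union>
     {(Vert v, Src) | v. v \<in> V} \<union> {(Snk, Vert v) | v. v \<in> V} \<union>
     {(Lam L, Vert v) | L v. L \<in> Lambda V E h \<and> v \<in> L} \<union>
     {(Vert v, Lam L) | L v. L \<in> Lambda V E h \<and> v \<in> L} \<union>
     {(Vert v, Lam L) | L v. L \<in> Lambda V E h \<and> v \<in> V \<and> is_hclique V E h (insert v L)} \<union>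
     {(Lam L, Vert v) | L v. L \<in> Lambda V E h \<and> v \<in> V \<and> is_hclique V E h (insert v L)}"

fun cap :: "'v set \<Rightarrow> 'v set set \<Rightarrow> nat \<Rightarrow> 'v node \<Rightarrow> 'v node \<Rightarrow> ereal" where
  "cap V E h Src (Vert v) = (if v \<in> V then ereal (real (cdeg V E h v)) else 0)"
| "cap V E h (Vert v) Snk = (if v \<in> V then ereal (real h * rho_star V E h) else 0)"
| "cap V E h (Lam L) (Vert v) = (if L \<in> Lambda V E h \<and> v \<in> L then \<infinity> else 0)"
| "cap V E h (Vert v) (Lam L) =
     (if L \<in> Lambda V E h \<and> v \<in> V \<and> is_hclique V E h (insert v L) then 1 else 0)"
| "cap V E h _ _ = 0"

definition is_flow :: "'v set \<Rightarrow> 'v set set \<Rightarrow> nat \<Rightarrow> ('v node \<Rightarrow> 'v node \<Rightarrow> real) \<Rightarrow> bool" where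
  "is_flow V E h f \<longleftrightarrow>
     (\<forall>u\<in>VH V E h. \<forall>w\<in>VH V E h. ereal (f u w) \<le> cap V E h u w \<and> f w u = - f u w) \<and>
     (\<forall>u\<in>VH V E h - {Src, Snk}. (\<Sum>w\<in>VH V E h. f u w) = 0)"

definition flow_value :: "'v set \<Rightarrow> 'v set set \<Rightarrow> nat \<Rightarrow> ('v node \<Rightarrow> 'v node \<Rightarrow> real) \<Rightarrow> real" where
  "flow_value V E h f = (\<Sum>w\<in>VH V E h. f Src w)"

definition is_max_flow :: "'v set \<Rightarrow> 'v set set \<Rightarrow> nat \<Rightarrow> ('v node \<Rightarrow> 'v node \<Rightarrow> real) \<Rightarrow> bool" where
  "is_max_flow V E h f \<longleftrightarrow> is_flow V E h f \<and>
     (\<forall>g. is_flow V E h g \<longrightarrow> flow_value V E h g \<le> flow_value V E h f)"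

definition res_arcs :: "'v set \<Rightarrow> 'v set set \<Rightarrow> nat \<Rightarrow> ('v node \<Rightarrow> 'v node \<Rightarrow> real)
    \<Rightarrow> ('v node \<times> 'v node) set" where
  "res_arcs V E h f = {(u, w) \<in> EH V E h. cap V E h u w - ereal (f u w) > 0}"

definition scc_of :: "'v set \<Rightarrow> 'v set set \<Rightarrow> nat \<Rightarrow> ('v node \<Rightarrow> 'v node \<Rightarrow> real)
    \<Rightarrow> 'v node \<Rightarrow> 'v node set" where
  "scc_of V E h f x = {y \<in> VH V E h. (x, y) \<in> (res_arcs V E h f)\<^sup>* \<and> (y, x) \<in> (res_arcs V E h f)\<^sup>*}"

definition SCCs :: "'v set \<Rightarrow> 'v set set \<Rightarrow> nat \<Rightarrow> ('v node \<Rightarrow> 'v node \<Rightarrow> real) \<Rightarrow> 'v node set set" where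
  "SCCs V E h f = scc_of V E h f ` VH V E h"

definition cond_arcs :: "'v set \<Rightarrow> 'v set set \<Rightarrow> nat \<Rightarrow> ('v node \<Rightarrow> 'v node \<Rightarrow> real)
    \<Rightarrow> ('v node set \<times> 'v node set) set" where
  "cond_arcs V E h f = {(C, C'). C \<in> SCCs V E h f \<and> C' \<in> SCCs V E h f \<and> C \<noteq> C' \<and>
      (\<exists>u\<in>C. \<exists>w\<in>C'. (u, w) \<in> res_arcs V E h f)}"

definition nontrivial :: "'v set \<Rightarrow> 'v set set \<Rightarrow> nat \<Rightarrow> ('v node \<Rightarrow> 'v node \<Rightarrow> real)
    \<Rightarrow> 'v node set \<Rightarrow> bool" where
  "nontrivial V E h f C \<longleftrightarrow> C \<in> SCCs V E h f \<and> Src \<notin> C \<and> Snk \<notin> C"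

definition des :: "'v set \<Rightarrow> 'v set set \<Rightarrow> nat \<Rightarrow> ('v node \<Rightarrow> 'v node \<Rightarrow> real)
    \<Rightarrow> 'v node set \<Rightarrow> 'v node set set" where
  "des V E h f C = {C'. nontrivial V E h f C' \<and> (C, C') \<in> (cond_arcs V E h f)\<^sup>+}"

definition des_set :: "'v set \<Rightarrow> 'v set set \<Rightarrow> nat \<Rightarrow> ('v node \<Rightarrow> 'v node \<Rightarrow> real)
    \<Rightarrow> 'v node set set \<Rightarrow> 'v node set set" where
  "des_set V E h f \<C> = (\<Union>C\<in>\<C>. des V E h f C)"

text \<open>C \<inter> V \<noteq> {} (identifying v \<in> V with the network node Vert v).\<close>
definition meets_V :: "'v set \<Rightarrow> 'v node set \<Rightarrow> bool" where
  "meets_V V C \<longleftrightarrow> (\<exists>v\<in>V. Vert v \<in> C)"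

definition independent_set :: "'v set \<Rightarrow> 'v set set \<Rightarrow> nat \<Rightarrow> ('v node \<Rightarrow> 'v node \<Rightarrow> real)
    \<Rightarrow> 'v node set set \<Rightarrow> bool" where
  "independent_set V E h f \<C> \<longleftrightarrow>
     (\<forall>C\<in>\<C>. nontrivial V E h f C \<and> meets_V V C) \<and>
     (\<forall>C1\<in>\<C>. \<forall>C2\<in>\<C>. C1 \<notin> des V E h f C2)"

definition d_closed :: "'v set \<Rightarrow> 'v set set \<Rightarrow> nat \<Rightarrow> ('v node \<Rightarrow> 'v node \<Rightarrow> real)
    \<Rightarrow> 'v node set set \<Rightarrow> bool" where
  "d_closed V E h f \<C> \<longleftrightarrow>
     (\<forall>C\<in>\<C>. nontrivial V E h f C) \<and>
     (\<forall>C\<in>\<C>. \<not> meets_V V C \<longrightarrow> (\<exists>C'\<in>\<C>. (C', C) \<in> cond_arcs V E h f)) \<and>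
     des_set V E h f \<C> \<subseteq> \<C>"

end

theory Submission
  imports Defs "HOL-Library.Transitive_Closure_Table"
begin

(*
  The inverse of g is D \<mapsto> D - des(D): the condensation is a finite DAG, so every member of a
  descendant-closed set descends from a minimal member, and the minimal members form an antichain.
  The flow enters only through the arc condition of d-closedness: a component C without graph
  nodes that descends from an independent set needs a non-trivial predecessor on such a path.
  That predecessor cannot contain s: C is some Lam L, and a vertex u of L outside C reaches s or t
  in the residual graph (otherwise its residual closure, which no flow leaves, would swallow a
  positive-capacity detour back to Lam L), which puts s into C or yields an augmenting path.
  Nor can it contain t: every vertex is reachable from s or t (the arc s -> v has capacity
  deg(v,h) > 0), so a vertex in a non-trivial component cannot reach t.
*)

text \<open>An abstract condensation: \<open>nontriv\<close> and \<open>marked\<close> stand for the non-trivial components and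
  those meeting V.\<close>

locale component_dag =
  fixes R :: "'c rel" and nontriv marked :: "'c \<Rightarrow> bool" and des :: "'c \<Rightarrow> 'c set"
  assumes des_eq: "des C = {C'. nontriv C' \<and> (C, C') \<in> R\<^sup>+}"
    and finite_nontriv: "finite (Collect nontriv)"
    and acyclic_R: "acyclic R"
    and pred_nontriv:
      "\<lbrakk>nontriv C0; marked C0; nontriv C; \<not> marked C; (C0, C') \<in> R\<^sup>+; (C', C) \<in> R\<rbrakk>
         \<Longrightarrow> nontriv C'"
begin

definition independent :: "'c set \<Rightarrow> bool" where
  "independent \<C> \<longleftrightarrow> (\<forall>C\<in>\<C>. nontriv C \<and> marked C) \<and> (\<forall>C1\<in>\<C>. \<forall>C2\<in>\<C>. C1 \<notin> des C2)"

definition closed :: "'c set \<Rightarrow> bool" where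
  "closed \<C> \<longleftrightarrow> (\<forall>C\<in>\<C>. nontriv C) \<and> (\<forall>C\<in>\<C>. \<not> marked C \<longrightarrow> (\<exists>C'\<in>\<C>. (C', C) \<in> R))
     \<and> \<Union> (des ` \<C>) \<subseteq> \<C>"

lemma des_trans: "C1 \<in> des C \<Longrightarrow> C2 \<in> des C1 \<Longrightarrow> C2 \<in> des C"
  unfolding des_eq by (auto intro: trancl_trans)

lemma Union_des_closure: "\<Union> (des ` (\<C> \<union> \<Union> (des ` \<C>))) = \<Union> (des ` \<C>)"
  by (auto dest: des_trans)

lemma closed_closure:
  assumes I: "independent \<C>"
  shows "closed (\<C> \<union> \<Union> (des ` \<C>))"
  unfolding closed_def
proof (intro conjI ballI impI)
  fix C assume "C \<in> \<C> \<union> \<Union> (des ` \<C>)"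
  then show "nontriv C"
    using I by (auto simp: independent_def des_eq)
next
  fix C assume C: "C \<in> \<C> \<union> \<Union> (des ` \<C>)" and unmarked: "\<not> marked C"
  then obtain C0 where C0: "C0 \<in> \<C>" and "C \<in> des C0"
    using I by (auto simp: independent_def)
  then have "nontriv C" and "(C0, C) \<in> R\<^sup>+"
    by (auto simp: des_eq)
  from \<open>(C0, C) \<in> R\<^sup>+\<close> show "\<exists>C'\<in>\<C> \<union> \<Union> (des ` \<C>). (C', C) \<in> R"
  proof (cases rule: tranclE)
    case base
    with C0 show ?thesis by blast
  next
    case (step C')
    moreover have "nontriv C0" "marked C0"
      using C0 I by (auto simp: independent_def)
    ultimately have "nontriv C'"
      using pred_nontriv \<open>nontriv C\<close> unmarked by blast
    with step C0 show ?thesis by (auto simp: des_eq)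
  qed
next
  show "\<Union> (des ` (\<C> \<union> \<Union> (des ` \<C>))) \<subseteq> \<C> \<union> \<Union> (des ` \<C>)"
    using Union_des_closure by blast
qed

lemma closure_minus_des:
  assumes "independent \<C>"
  shows "(\<C> \<union> \<Union> (des ` \<C>)) - \<Union> (des ` (\<C> \<union> \<Union> (des ` \<C>))) = \<C>"
  using assms Union_des_closure by (auto simp: independent_def)

lemma wf_ancestor: "wf {(C', C). nontriv C' \<and> nontriv C \<and> (C', C) \<in> R\<^sup>+}"
proof (rule finite_acyclic_wf)
  show "finite {(C', C). nontriv C' \<and> nontriv C \<and> (C', C) \<in> R\<^sup>+}"
    by (rule finite_subset[of _ "Collect nontriv \<times> Collect nontriv"]) (auto simp: finite_nontriv)
  show "acyclic {(C', C). nontriv C' \<and> nontriv C \<and> (C', C) \<in> R\<^sup>+}"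
  proof (rule acyclic_subset)
    show "acyclic (R\<^sup>+)"
      using acyclic_R by (simp add: acyclic_def)
  qed auto
qed

lemma independent_minimal:
  assumes "closed D"
  shows "independent (D - \<Union> (des ` D))"
  unfolding independent_def
proof (intro conjI ballI)
  fix C assume C: "C \<in> D - \<Union> (des ` D)"
  then show "nontriv C"
    using assms by (auto simp: closed_def)
  show "marked C"
  proof (rule ccontr)
    assume "\<not> marked C"
    then obtain C' where "C' \<in> D" and "(C', C) \<in> R"
      using assms C by (auto simp: closed_def)
    with \<open>nontriv C\<close> have "C \<in> \<Union> (des ` D)"
      by (auto simp: des_eq)
    with C show False by blast
  qed
qed blast

lemma closed_eq_closure_of_minimal:
  assumes D: "closed D"
  shows "(D - \<Union> (des ` D)) \<union> \<Union> (des ` (D - \<Union> (des ` D))) = D"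
proof
  show "(D - \<Union> (des ` D)) \<union> \<Union> (des ` (D - \<Union> (des ` D))) \<subseteq> D"
    using D by (auto simp: closed_def)
  have "C \<in> D - \<Union> (des ` D) \<or> (\<exists>C0 \<in> D - \<Union> (des ` D). C \<in> des C0)" if "C \<in> D" for C
    using that
  proof (induction C rule: wf_induct_rule[OF wf_ancestor])
    case (1 C)
    show ?case
    proof (cases "C \<in> \<Union> (des ` D)")
      case True
      then obtain C' where C': "C' \<in> D" "C \<in> des C'"
        by blast
      moreover from this have "(C', C) \<in> {(C', C). nontriv C' \<and> nontriv C \<and> (C', C) \<in> R\<^sup>+}"
        using D by (auto simp: closed_def des_eq)
      ultimately have "C' \<in> D - \<Union> (des ` D) \<or> (\<exists>C0 \<in> D - \<Union> (des ` D). C' \<in> des C0)"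
        using "1.IH" by blast
      with C' show ?thesis
        using des_trans by blast
    qed (use "1.prems" in blast)
  qed
  then show "D \<subseteq> (D - \<Union> (des ` D)) \<union> \<Union> (des ` (D - \<Union> (des ` D)))"
    by blast
qed

theorem bij_betw_independent_closed:
  "bij_betw (\<lambda>\<C>. \<C> \<union> \<Union> (des ` \<C>)) (Collect independent) (Collect closed)"
proof (rule bij_betw_byWitness[where f' = "\<lambda>D. D - \<Union> (des ` D)"])
  show "\<forall>\<C>\<in>Collect independent. (\<C> \<union> \<Union> (des ` \<C>)) - \<Union> (des ` (\<C> \<union> \<Union> (des ` \<C>))) = \<C>"
    using closure_minus_des by blast
  show "\<forall>D\<in>Collect closed. (D - \<Union> (des ` D)) \<union> \<Union> (des ` (D - \<Union> (des ` D))) = D"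
    using closed_eq_closure_of_minimal by blast
  show "(\<lambda>\<C>. \<C> \<union> \<Union> (des ` \<C>)) ` Collect independent \<subseteq> Collect closed"
    using closed_closure by blast
  show "(\<lambda>D. D - \<Union> (des ` D)) ` Collect closed \<subseteq> Collect independent"
    using independent_minimal by blast
qed

end

fun path_flow :: "'a \<Rightarrow> 'a list \<Rightarrow> 'a \<Rightarrow> 'a \<Rightarrow> real" where
  "path_flow x [] u w = 0"
| "path_flow x (y # ys) u w =
     path_flow y ys u w + of_bool (u = x \<and> w = y) - of_bool (u = y \<and> w = x)"

fun path_arcs :: "'a \<Rightarrow> 'a list \<Rightarrow> ('a \<times> 'a) set" where
  "path_arcs x [] = {}"
| "path_arcs x (y # ys) = insert (x, y) (path_arcs y ys)"

lemma path_flow_antisym: "path_flow x xs w u = - path_flow x xs u w"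
  by (induction xs arbitrary: x) (simp_all add: conj_commute)

lemma finite_path_arcs: "finite (path_arcs x xs)"
  by (induction xs arbitrary: x) auto

lemma path_arcs_subset: "path_arcs x xs \<subseteq> set (x # xs) \<times> set xs"
  by (induction xs arbitrary: x) auto

lemma path_arcs_in_rel: "rtrancl_path r x xs z \<Longrightarrow> (a, b) \<in> path_arcs x xs \<Longrightarrow> r a b"
  by (induction rule: rtrancl_path.induct) auto

lemma path_flow_le_path_arcs:
  "distinct (x # xs) \<Longrightarrow> path_flow x xs u w \<le> of_bool ((u, w) \<in> path_arcs x xs)"
proof (induction xs arbitrary: x)
  case (Cons y ys)
  then have IH: "path_flow y ys u w \<le> of_bool ((u, w) \<in> path_arcs y ys)"
    by simp
  have step: "path_flow x (y # ys) u w \<le> path_flow y ys u w + of_bool (u = x \<and> w = y)"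
    by simp
  show ?case
  proof (cases "u = x \<and> w = y")
    case True
    then have "(u, w) \<notin> path_arcs y ys"
      using Cons.prems path_arcs_subset[of y ys] by auto
    with IH have "path_flow y ys u w \<le> 0"
      by simp
    moreover from True have "of_bool (u = x \<and> w = y) = (1::real)"
      by simp
    ultimately have "path_flow x (y # ys) u w \<le> 1"
      using step by linarith
    with True show ?thesis
      by simp
  next
    case False
    then have "of_bool (u = x \<and> w = y) = (0::real)"
      by simp
    with step have "path_flow x (y # ys) u w \<le> path_flow y ys u w"
      by linarith
    also note IH
    also have "of_bool ((u, w) \<in> path_arcs y ys) \<le> (of_bool ((u, w) \<in> path_arcs x (y # ys)) :: real)"
      by (cases "(u, w) \<in> path_arcs y ys") simp_all
    finally show ?thesis .
  qed
qed simp

lemma sum_path_flow: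
  assumes "rtrancl_path r x xs z" and "\<And>a b. r a b \<Longrightarrow> a \<in> S \<and> b \<in> S" and "finite S" and "x \<in> S"
  shows "(\<Sum>w\<in>S. path_flow x xs u w) = of_bool (u = x) - of_bool (u = z)"
  using assms
proof (induction rule: rtrancl_path.induct)
  case (step x y ys z)
  then have "y \<in> S" by blast
  with step show ?case
    by (simp add: sum.distrib sum_subtractf)
qed simp

lemma sum_sum_nonneg_eq_0:
  fixes g :: "'a \<Rightarrow> 'b \<Rightarrow> 'c::ordered_comm_monoid_add"
  assumes "finite A" "finite B" "\<And>a b. a \<in> A \<Longrightarrow> b \<in> B \<Longrightarrow> 0 \<le> g a b"
    and "(\<Sum>a\<in>A. \<Sum>b\<in>B. g a b) = 0" and "a \<in> A" "b \<in> B"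
  shows "g a b = 0"
proof -
  have "\<forall>a\<in>A. 0 \<le> (\<Sum>b\<in>B. g a b)"
    using assms(3) by (simp add: sum_nonneg)
  with assms(1,4,5) have "(\<Sum>b\<in>B. g a b) = 0"
    by (simp add: sum_nonneg_eq_0_iff)
  with assms(2,3,5,6) show ?thesis
    by (simp add: sum_nonneg_eq_0_iff)
qed

locale clique_flow_network =
  fixes V :: "'v set" and E :: "'v set set" and h :: nat and f :: "'v node \<Rightarrow> 'v node \<Rightarrow> real"
  assumes simple: "simple_graph V E" and h_ge_2: "h \<ge> 2"
    and covered: "\<forall>v\<in>V. \<exists>K. is_hclique V E h K \<and> v \<in> K"
    and max_flow: "is_max_flow V E h f"
begin

abbreviation "nodes \<equiv> VH V E h"
abbreviation "c \<equiv> cap V E h"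
abbreviation "res \<equiv> res_arcs V E h f"
abbreviation "scc \<equiv> scc_of V E h f"

lemma finite_V: "finite V"
  using simple by (simp add: simple_graph_def)

lemma Lambda_subset: "L \<in> Lambda V E h \<Longrightarrow> L \<subseteq> V"
  by (simp add: Lambda_def is_hclique_def)

lemma finite_nodes: "finite nodes"
proof -
  have "Lambda V E h \<subseteq> Pow V"
    using Lambda_subset by blast
  then have "finite (Lambda V E h)"
    using finite_V finite_subset by blast
  then show ?thesis
    using finite_V by (simp add: VH_def)
qed

lemma mem_nodes [simp]:
  "Src \<in> nodes" "Snk \<in> nodes" "Vert v \<in> nodes \<longleftrightarrow> v \<in> V" "Lam L \<in> nodes \<longleftrightarrow> L \<in> Lambda V E h"
  by (auto simp: VH_def)

lemma EH_sym: "(u, w) \<in> EH V E h \<Longrightarrow> (w, u) \<in> EH V E h"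
  unfolding EH_def by blast

lemma mem_Lambda_in_V: "L \<in> Lambda V E h \<Longrightarrow> v \<in> L \<Longrightarrow> v \<in> V"
  using Lambda_subset by blast

lemma EH_subset: "EH V E h \<subseteq> nodes \<times> nodes"
  by (auto simp: EH_def intro: mem_Lambda_in_V)

lemma res_in_nodes: "(u, w) \<in> res \<Longrightarrow> u \<in> nodes \<and> w \<in> nodes"
  using EH_subset by (auto simp: res_arcs_def)

lemma cap_nonneg: "0 \<le> c u w"
proof -
  have "0 \<le> rho_star V E h" if "v \<in> V" for v
  proof -
    let ?S = "{rho V E h W | W. W \<noteq> {} \<and> W \<subseteq> V}"
    have "finite ?S"
      using finite_V by simp
    moreover have "?S \<noteq> {}"
      using that by auto
    ultimately have "rho_star V E h \<in> ?S"
      unfolding rho_star_def by (rule Max_in)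
    then show ?thesis
      by (auto simp: rho_def)
  qed
  then show ?thesis
    by (cases u; cases w) auto
qed

lemma cap_eq_0_if_not_EH: "(u, w) \<notin> EH V E h \<Longrightarrow> c u w = 0"
  by (cases u; cases w) (auto simp: EH_def)

lemma cdeg_pos: "v \<in> V \<Longrightarrow> 0 < cdeg V E h v"
proof -
  assume "v \<in> V"
  have "{K. is_hclique V E h K \<and> v \<in> K} \<subseteq> Pow V"
    by (auto simp: is_hclique_def)
  then have "finite {K. is_hclique V E h K \<and> v \<in> K}"
    using finite_V finite_subset by blast
  moreover have "{K. is_hclique V E h K \<and> v \<in> K} \<noteq> {}"
    using covered \<open>v \<in> V\<close> by auto
  ultimately show ?thesis
    by (simp add: cdeg_def card_gt_0_iff)
qed

lemma flow: "is_flow V E h f"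
  using max_flow by (simp add: is_max_flow_def)

lemma flow_le_cap: "u \<in> nodes \<Longrightarrow> w \<in> nodes \<Longrightarrow> ereal (f u w) \<le> c u w"
  using flow unfolding is_flow_def by blast

lemma flow_antisym: "u \<in> nodes \<Longrightarrow> w \<in> nodes \<Longrightarrow> f w u = - f u w"
  using flow unfolding is_flow_def by blast

lemma flow_conservation: "u \<in> nodes \<Longrightarrow> u \<noteq> Src \<Longrightarrow> u \<noteq> Snk \<Longrightarrow> (\<Sum>w\<in>nodes. f u w) = 0"
  using flow unfolding is_flow_def by blast

lemma cap_le_flow_if_not_res:
  assumes "u \<in> nodes" "w \<in> nodes" "(u, w) \<notin> res"
  shows "c u w \<le> ereal (f u w)"
proof (cases "(u, w) \<in> EH V E h")
  case True
  with assms(3) have "\<not> 0 < c u w - ereal (f u w)"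
    by (simp add: res_arcs_def)
  then show ?thesis
    by (cases "c u w") auto
next
  case False
  then have "c u w = 0" and "c w u = 0"
    using EH_sym cap_eq_0_if_not_EH by blast+
  with flow_le_cap[OF assms(1,2)] flow_le_cap[OF assms(2,1)] flow_antisym[OF assms(1,2)]
  show ?thesis
    by simp
qed

lemma net_flow_out_eq_0:
  assumes "Z \<subseteq> nodes" "Src \<notin> Z" "Snk \<notin> Z"
  shows "(\<Sum>z\<in>Z. \<Sum>w\<in>nodes - Z. f z w) = 0"
proof -
  have "finite Z"
    using assms(1) finite_nodes finite_subset by blast
  have inner: "(\<Sum>z\<in>Z. \<Sum>w\<in>Z. f z w) = 0"
  proof -
    have "(\<Sum>z\<in>Z. \<Sum>w\<in>Z. f z w) = (\<Sum>w\<in>Z. \<Sum>z\<in>Z. f z w)"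
      by (rule sum.swap)
    also have "\<dots> = (\<Sum>w\<in>Z. \<Sum>z\<in>Z. - f w z)"
      using flow_antisym assms(1) by (intro sum.cong refl) (metis subsetD)
    also have "\<dots> = - (\<Sum>w\<in>Z. \<Sum>z\<in>Z. f w z)"
      by (simp add: sum_negf)
    finally show ?thesis
      by simp
  qed
  have "(\<Sum>z\<in>Z. \<Sum>w\<in>nodes. f z w) = 0"
    using flow_conservation assms by (intro sum.neutral) auto
  moreover have "(\<Sum>w\<in>nodes. f z w) = (\<Sum>w\<in>Z. f z w) + (\<Sum>w\<in>nodes - Z. f z w)" for z
    using assms(1) finite_nodes by (metis sum.subset_diff add.commute)
  ultimately show ?thesis
    using inner by (simp add: sum.distrib)
qed

abbreviation "cond \<equiv> cond_arcs V E h f"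

lemma rtrancl_res_in_nodes: "(a, b) \<in> res\<^sup>* \<Longrightarrow> a \<in> nodes \<Longrightarrow> b \<in> nodes"
  by (induction rule: rtrancl_induct) (auto dest: res_in_nodes)

lemma scc_of_eq: "y \<in> scc x \<Longrightarrow> scc y = scc x"
  unfolding scc_of_def by (auto intro: rtrancl_trans)

lemma SCCs_eq_scc_of: "C \<in> SCCs V E h f \<Longrightarrow> a \<in> C \<Longrightarrow> C = scc a"
  unfolding SCCs_def using scc_of_eq by auto

lemma SCCs_reach: "C \<in> SCCs V E h f \<Longrightarrow> a \<in> C \<Longrightarrow> b \<in> C \<Longrightarrow> (a, b) \<in> res\<^sup>*"
  unfolding SCCs_def scc_of_def by (auto intro: rtrancl_trans)

lemma in_scc_ofI: "a \<in> nodes \<Longrightarrow> (a, b) \<in> res\<^sup>* \<Longrightarrow> (b, a) \<in> res\<^sup>* \<Longrightarrow> b \<in> scc a"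
  unfolding scc_of_def using rtrancl_res_in_nodes by auto

lemma SCCs_obtain:
  assumes "C \<in> SCCs V E h f"
  obtains x where "x \<in> nodes" "x \<in> C" "C = scc x"
  using assms by (auto simp: SCCs_def scc_of_def)

lemma finite_SCCs: "finite (SCCs V E h f)"
  unfolding SCCs_def using finite_nodes by simp

lemma cond_reach:
  assumes "(C1, C2) \<in> cond" "a \<in> C1" "b \<in> C2"
  shows "(a, b) \<in> res\<^sup>*"
proof -
  from assms(1) obtain u w where "u \<in> C1" "w \<in> C2" "(u, w) \<in> res"
    and "C1 \<in> SCCs V E h f" "C2 \<in> SCCs V E h f"
    by (auto simp: cond_arcs_def)
  with assms(2,3) have "(a, u) \<in> res\<^sup>*" "(w, b) \<in> res\<^sup>*"
    by (blast intro: SCCs_reach)+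
  with \<open>(u, w) \<in> res\<close> show ?thesis
    by (meson rtrancl_into_rtrancl rtrancl_trans)
qed

lemma trancl_cond_reach:
  assumes "(C1, C2) \<in> cond\<^sup>+" "a \<in> C1" "b \<in> C2"
  shows "(a, b) \<in> res\<^sup>*"
  using assms(1,3)
proof (induction arbitrary: b rule: trancl_induct)
  case (base C2)
  then show ?case
    using assms(2) cond_reach by blast
next
  case (step C C2)
  from \<open>(C, C2) \<in> cond\<close> obtain c where "c \<in> C"
    by (auto simp: cond_arcs_def elim: SCCs_obtain)
  with step show ?case
    by (blast intro: rtrancl_trans cond_reach)
qed

lemma acyclic_cond: "acyclic cond"
proof (rule acyclicI, intro allI notI)
  fix C assume "(C, C) \<in> cond\<^sup>+"
  then obtain C' where "(C, C') \<in> cond" and "(C', C) \<in> cond\<^sup>*"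
    by (meson tranclD)
  then have "C \<in> SCCs V E h f" "C' \<in> SCCs V E h f" "C \<noteq> C'"
    by (auto simp: cond_arcs_def)
  then obtain a b where a: "a \<in> nodes" "a \<in> C" "C = scc a" and b: "b \<in> C'"
    by (metis SCCs_obtain)
  have "(a, b) \<in> res\<^sup>*"
    using cond_reach \<open>(C, C') \<in> cond\<close> a b by blast
  moreover from \<open>(C', C) \<in> cond\<^sup>*\<close> \<open>C \<noteq> C'\<close> have "(C', C) \<in> cond\<^sup>+"
    by (auto dest: rtranclD)
  then have "(b, a) \<in> res\<^sup>*"
    using trancl_cond_reach a b by blast
  ultimately have "b \<in> C"
    using a in_scc_ofI by blast
  with b \<open>C' \<in> SCCs V E h f\<close> \<open>C \<in> SCCs V E h f\<close> have "C' = C"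
    by (metis SCCs_eq_scc_of)
  with \<open>C \<noteq> C'\<close> show False by simp
qed

lemma res_slack:
  assumes "(u, w) \<in> res"
  obtains \<delta> where "0 < \<delta>" "ereal (f u w + \<delta>) \<le> c u w"
proof (cases "c u w")
  case (real r)
  with assms have "0 < r - f u w"
    by (simp add: res_arcs_def)
  with real show ?thesis
    by (intro that[of "r - f u w"]) simp_all
next
  case PInf
  then show ?thesis
    by (intro that[of 1]) simp_all
next
  case MInf
  with cap_nonneg[of u w] show ?thesis
    by simp
qed

lemma res_slack_uniform:
  assumes "finite A" "A \<subseteq> res"
  shows "\<exists>\<epsilon>>0. \<forall>(u, w)\<in>A. ereal (f u w + \<epsilon>) \<le> c u w"
  using assms
proof (induction rule: finite_induct)
  case empty
  show ?case
    by (intro exI[of _ 1]) simp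
next
  case (insert a A)
  then obtain \<epsilon> where "0 < \<epsilon>" and \<epsilon>: "\<forall>(u, w)\<in>A. ereal (f u w + \<epsilon>) \<le> c u w"
    by auto
  obtain u w where a: "a = (u, w)"
    by fastforce
  with insert.prems obtain \<delta> where "0 < \<delta>" and \<delta>: "ereal (f u w + \<delta>) \<le> c u w"
    by (auto elim: res_slack)
  have "ereal (f x y + min \<epsilon> \<delta>) \<le> c x y" if "(x, y) \<in> insert a A" for x y
  proof (cases "(x, y) = a")
    case True
    with a have "x = u" "y = w"
      by simp_all
    have "ereal (f u w + min \<epsilon> \<delta>) \<le> ereal (f u w + \<delta>)"
      by simp
    also note \<delta>
    finally show ?thesis
      using \<open>x = u\<close> \<open>y = w\<close> by simp
  next
    case False
    have "ereal (f x y + min \<epsilon> \<delta>) \<le> ereal (f x y + \<epsilon>)"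
      by simp
    also from False that \<epsilon> have "\<dots> \<le> c x y"
      by auto
    finally show ?thesis .
  qed
  with \<open>0 < \<epsilon>\<close> \<open>0 < \<delta>\<close> show ?case
    by (intro exI[of _ "min \<epsilon> \<delta>"]) auto
qed

lemma augmented_flow:
  assumes path: "rtrancl_path (\<lambda>a b. (a, b) \<in> res) Src xs Snk" and "distinct (Src # xs)"
    and "0 < \<epsilon>" and slack: "\<forall>(u, w)\<in>path_arcs Src xs. ereal (f u w + \<epsilon>) \<le> c u w"
  defines "g \<equiv> \<lambda>u w. f u w + \<epsilon> * path_flow Src xs u w"
  shows "is_flow V E h g" and "flow_value V E h g = flow_value V E h f + \<epsilon>"
proof -
  have sum_path: "(\<Sum>w\<in>nodes. path_flow Src xs u w) = of_bool (u = Src) - of_bool (u = Snk)" for u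
    using res_in_nodes finite_nodes by (intro sum_path_flow[OF path]) auto
  have sum_g: "(\<Sum>w\<in>nodes. g u w) = (\<Sum>w\<in>nodes. f u w) + \<epsilon> * (of_bool (u = Src) - of_bool (u = Snk))"
    for u
    by (simp add: g_def sum.distrib flip: sum_distrib_left sum_path)
  show "is_flow V E h g"
    unfolding is_flow_def
  proof (intro conjI ballI)
    fix u w assume u: "u \<in> nodes" and w: "w \<in> nodes"
    show "g w u = - g u w"
      using flow_antisym[OF u w] path_flow_antisym[of Src xs w u] by (simp add: g_def)
    have path_flow_le: "path_flow Src xs u w \<le> of_bool ((u, w) \<in> path_arcs Src xs)"
      using \<open>distinct (Src # xs)\<close> by (rule path_flow_le_path_arcs)
    show "ereal (g u w) \<le> c u w"
    proof (cases "(u, w) \<in> path_arcs Src xs")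
      case True
      with path_flow_le \<open>0 < \<epsilon>\<close> have "ereal (g u w) \<le> ereal (f u w + \<epsilon>)"
        by (simp add: g_def)
      also from True slack have "\<dots> \<le> c u w"
        by auto
      finally show ?thesis .
    next
      case False
      with path_flow_le \<open>0 < \<epsilon>\<close> have "ereal (g u w) \<le> ereal (f u w)"
        by (simp add: g_def mult_nonneg_nonpos)
      also have "\<dots> \<le> c u w"
        using u w by (rule flow_le_cap)
      finally show ?thesis .
    qed
  next
    fix u assume "u \<in> nodes - {Src, Snk}"
    with flow_conservation[of u] show "(\<Sum>w\<in>nodes. g u w) = 0"
      by (simp add: sum_g)
  qed
  show "flow_value V E h g = flow_value V E h f + \<epsilon>"
    by (simp add: flow_value_def sum_g)
qed

lemma Src_not_reaches_Snk: "(Src, Snk) \<notin> res\<^sup>*"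
proof
  assume "(Src, Snk) \<in> res\<^sup>*"
  then obtain xs where "rtrancl_path (\<lambda>a b. (a, b) \<in> res) Src xs Snk"
    by (auto simp: rtrancl_def rtranclp_eq_rtrancl_path)
  then obtain xs where path: "rtrancl_path (\<lambda>a b. (a, b) \<in> res) Src xs Snk"
    and distinct: "distinct (Src # xs)"
    by (rule rtrancl_path_distinct)
  have "path_arcs Src xs \<subseteq> res"
    using path_arcs_in_rel[OF path] by auto
  then obtain \<epsilon> where "0 < \<epsilon>" and slack: "\<forall>(u, w)\<in>path_arcs Src xs. ereal (f u w + \<epsilon>) \<le> c u w"
    using res_slack_uniform[OF finite_path_arcs] by blast
  let ?g = "\<lambda>u w. f u w + \<epsilon> * path_flow Src xs u w"
  have "is_flow V E h ?g"
    using path distinct \<open>0 < \<epsilon>\<close> slack by (rule augmented_flow)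
  with max_flow have "flow_value V E h ?g \<le> flow_value V E h f"
    unfolding is_max_flow_def by blast
  moreover have "flow_value V E h ?g = flow_value V E h f + \<epsilon>"
    using path distinct \<open>0 < \<epsilon>\<close> slack by (rule augmented_flow)
  ultimately show False
    using \<open>0 < \<epsilon>\<close> by simp
qed

lemma cap_leaving_res_closed_eq_0:
  assumes R: "R \<subseteq> nodes" "Src \<notin> R" "Snk \<notin> R"
    and res_closed: "\<And>r w. r \<in> R \<Longrightarrow> (r, w) \<in> res \<Longrightarrow> w \<in> R"
    and "r \<in> R" "w \<in> nodes - R"
  shows "c r w = 0"
proof -
  have saturated: "c z y \<le> ereal (f z y)" if "z \<in> R" "y \<in> nodes - R" for z y
    using that R(1) res_closed by (blast intro: cap_le_flow_if_not_res)
  have "finite R"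
    using R(1) finite_nodes finite_subset by blast
  moreover have "0 \<le> f z y" if "z \<in> R" "y \<in> nodes - R" for z y
    using order_trans[OF cap_nonneg saturated[OF that]] by simp
  ultimately have "f r w = 0"
    using finite_nodes net_flow_out_eq_0[OF R] \<open>r \<in> R\<close> \<open>w \<in> nodes - R\<close>
    by (intro sum_sum_nonneg_eq_0[where g = f]) auto
  with saturated[OF \<open>r \<in> R\<close> \<open>w \<in> nodes - R\<close>] cap_nonneg[of r w] show ?thesis
    by (simp add: zero_ereal_def antisym)
qed

text \<open>The nodes unreachable from both terminals receive no residual arcs, so their net outflow
  vanishes only if no flow leaves them at all; in particular s -> v would carry no flow.\<close>

lemma Vert_reachable_from_terminal:
  assumes "v \<in> V"
  shows "(Src, Vert v) \<in> res\<^sup>* \<or> (Snk, Vert v) \<in> res\<^sup>*"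
proof (rule ccontr)
  assume unreachable: "\<not> ?thesis"
  define Z where "Z = {z \<in> nodes. (Src, z) \<notin> res\<^sup>* \<and> (Snk, z) \<notin> res\<^sup>*}"
  have Z: "Z \<subseteq> nodes" "Src \<notin> Z" "Snk \<notin> Z" "Vert v \<in> Z"
    using assms unreachable by (auto simp: Z_def)
  have "0 \<le> - f z y" if "z \<in> Z" "y \<in> nodes - Z" for z y
  proof -
    from that have "(y, z) \<notin> res"
      unfolding Z_def by (blast intro: rtrancl_into_rtrancl)
    with that Z(1) have "c y z \<le> ereal (f y z)"
      by (blast intro: cap_le_flow_if_not_res)
    from order_trans[OF cap_nonneg this] have "0 \<le> f y z"
      by simp
    with that Z(1) flow_antisym[of z y] show ?thesis
      by auto
  qed
  moreover have "finite Z"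
    using Z(1) finite_nodes finite_subset by blast
  moreover have "(\<Sum>z\<in>Z. \<Sum>y\<in>nodes - Z. - f z y) = 0"
    using net_flow_out_eq_0[OF Z(1-3)] by (simp add: sum_negf)
  ultimately have "- f (Vert v) Src = 0"
    using finite_nodes Z by (intro sum_sum_nonneg_eq_0[where g = "\<lambda>z y. - f z y"]) auto
  with assms flow_antisym[of "Vert v" Src] have "f Src (Vert v) = 0"
    by simp
  moreover have "c Src (Vert v) \<le> ereal (f Src (Vert v))"
    using unreachable assms by (intro cap_le_flow_if_not_res) auto
  ultimately show False
    using cdeg_pos[OF assms] assms by simp
qed

text \<open>The witnesses: take an h-clique K \<supseteq> L, some x \<in> K - L, and M = K - {u}.\<close>

lemma Lambda_detour:
  assumes L: "L \<in> Lambda V E h" and "u \<in> L"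
  obtains x M where "x \<in> V" "M \<in> Lambda V E h" "c (Vert u) (Lam M) = 1"
    "c (Lam M) (Vert x) = \<infinity>" "c (Vert x) (Lam L) = 1"
proof -
  from L obtain K where K: "is_hclique V E h K" and "L \<subseteq> K"
    and "finite L" "card L = h - 1"
    by (auto simp: Lambda_def is_hclique_def)
  then have "finite K" "card K = h" "K \<subseteq> V" and adj: "\<forall>a\<in>K. \<forall>b\<in>K. a \<noteq> b \<longrightarrow> {a, b} \<in> E"
    by (auto simp: is_hclique_def)
  have "\<not> K \<subseteq> L"
  proof
    assume "K \<subseteq> L"
    with \<open>finite L\<close> have "card K \<le> card L"
      by (rule card_mono)
    with \<open>card K = h\<close> \<open>card L = h - 1\<close> h_ge_2 show False
      by simp
  qed
  then obtain x where "x \<in> K" "x \<notin> L"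
    by blast
  have "u \<in> K" "x \<noteq> u"
    using \<open>u \<in> L\<close> \<open>L \<subseteq> K\<close> \<open>x \<notin> L\<close> by auto
  define M where "M = K - {u}"
  have "is_hclique V E (h - 1) M"
    unfolding is_hclique_def M_def
    using \<open>finite K\<close> \<open>card K = h\<close> \<open>K \<subseteq> V\<close> adj \<open>u \<in> K\<close> by auto
  with K have M: "M \<in> Lambda V E h"
    unfolding Lambda_def M_def by blast
  have "card (insert x L) = h"
    using \<open>finite L\<close> \<open>x \<notin> L\<close> \<open>card L = h - 1\<close> h_ge_2 by simp
  then have "is_hclique V E h (insert x L)"
    unfolding is_hclique_def
    using \<open>finite L\<close> \<open>x \<in> K\<close> \<open>L \<subseteq> K\<close> \<open>K \<subseteq> V\<close> adj by (auto simp: subset_iff)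
  moreover have "insert u M = K" "x \<in> M"
    using \<open>u \<in> K\<close> \<open>x \<in> K\<close> \<open>x \<noteq> u\<close> by (auto simp: M_def)
  moreover have "u \<in> V" "x \<in> V"
    using \<open>u \<in> K\<close> \<open>x \<in> K\<close> \<open>K \<subseteq> V\<close> by auto
  ultimately show ?thesis
    using L M K by (intro that[of x M]) simp_all
qed

lemma Lam_to_Vert_res: "L \<in> Lambda V E h \<Longrightarrow> u \<in> L \<Longrightarrow> (Lam L, Vert u) \<in> res"
  by (simp add: res_arcs_def EH_def)

lemma Vert_reaches_terminal_unless_in_scc_Lam:
  assumes L: "L \<in> Lambda V E h" and "u \<in> L" and "Vert u \<notin> scc (Lam L)"
  shows "(Vert u, Src) \<in> res\<^sup>* \<or> (Vert u, Snk) \<in> res\<^sup>*"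
proof (rule ccontr)
  assume no_terminal: "\<not> ?thesis"
  define R where "R = {w \<in> nodes. (Vert u, w) \<in> res\<^sup>*}"
  have R: "R \<subseteq> nodes" "Src \<notin> R" "Snk \<notin> R"
    using no_terminal by (auto simp: R_def)
  have res_closed: "\<And>r w. r \<in> R \<Longrightarrow> (r, w) \<in> res \<Longrightarrow> w \<in> R"
    unfolding R_def using res_in_nodes by (auto intro: rtrancl_into_rtrancl)
  have arc_stays: "w \<in> R" if "r \<in> R" "w \<in> nodes" "c r w \<noteq> 0" for r w
  proof (rule ccontr)
    assume "w \<notin> R"
    with that R res_closed have "c r w = 0"
      by (intro cap_leaving_res_closed_eq_0[of R]) auto
    with that show False
      by simp
  qed
  have "u \<in> V"
    using L \<open>u \<in> L\<close> by (rule mem_Lambda_in_V)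
  then have "Vert u \<in> R"
    by (simp add: R_def)
  obtain x M where "x \<in> V" "M \<in> Lambda V E h" "c (Vert u) (Lam M) = 1"
    "c (Lam M) (Vert x) = \<infinity>" "c (Vert x) (Lam L) = 1"
    using Lambda_detour[OF L \<open>u \<in> L\<close>] by blast
  with \<open>Vert u \<in> R\<close> have "Lam M \<in> R"
    using arc_stays[of "Vert u" "Lam M"] by simp
  with \<open>x \<in> V\<close> \<open>c (Lam M) (Vert x) = \<infinity>\<close> have "Vert x \<in> R"
    using arc_stays[of "Lam M" "Vert x"] by simp
  with L \<open>c (Vert x) (Lam L) = 1\<close> have "Lam L \<in> R"
    using arc_stays[of "Vert x" "Lam L"] by simp
  then have "(Vert u, Lam L) \<in> res\<^sup>*"
    by (simp add: R_def)
  moreover have "(Lam L, Vert u) \<in> res\<^sup>*"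
    using Lam_to_Vert_res[OF L \<open>u \<in> L\<close>] by blast
  ultimately show False
    using in_scc_ofI L \<open>Vert u \<notin> scc (Lam L)\<close> by simp
qed

lemma Vert_free_nontrivial_SCC:
  assumes "nontrivial V E h f C" "\<not> meets_V V C"
  obtains L where "L \<in> Lambda V E h" "Lam L \<in> C" "C = scc (Lam L)"
proof -
  from assms(1) obtain y where "y \<in> nodes" "y \<in> C" "C = scc y"
    by (auto simp: nontrivial_def elim: SCCs_obtain)
  with assms show ?thesis
    by (cases y) (auto simp: nontrivial_def meets_V_def intro: that)
qed

lemma Src_not_reaches_Vert_free_SCC:
  assumes C: "nontrivial V E h f C" "\<not> meets_V V C" and "x \<in> C"
  shows "(Src, x) \<notin> res\<^sup>*"
proof
  assume "(Src, x) \<in> res\<^sup>*"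
  obtain L where L: "L \<in> Lambda V E h" "Lam L \<in> C" "C = scc (Lam L)"
    using C by (rule Vert_free_nontrivial_SCC)
  with \<open>x \<in> C\<close> \<open>(Src, x) \<in> res\<^sup>*\<close> have Src_Lam: "(Src, Lam L) \<in> res\<^sup>*"
    by (auto simp: scc_of_def intro: rtrancl_trans)
  from L h_ge_2 obtain u where "u \<in> L"
    by (fastforce simp: Lambda_def is_hclique_def)
  then have Lam_u: "(Lam L, Vert u) \<in> res\<^sup>*"
    using Lam_to_Vert_res L by blast
  have "Vert u \<notin> scc (Lam L)"
    using C L \<open>u \<in> L\<close> mem_Lambda_in_V by (auto simp: meets_V_def)
  with L \<open>u \<in> L\<close> consider "(Vert u, Src) \<in> res\<^sup>*" | "(Vert u, Snk) \<in> res\<^sup>*"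
    using Vert_reaches_terminal_unless_in_scc_Lam by blast
  then show False
  proof cases
    case 1
    with Src_Lam Lam_u L have "Src \<in> C"
      by (auto intro: in_scc_ofI rtrancl_trans)
    with C show False
      by (simp add: nontrivial_def)
  next
    case 2
    with Src_Lam Lam_u Src_not_reaches_Snk show False
      by (meson rtrancl_trans)
  qed
qed

lemma Vert_in_nontrivial_SCC_not_reaches_Snk:
  assumes "nontrivial V E h f C" "v \<in> V" "Vert v \<in> C"
  shows "(Vert v, Snk) \<notin> res\<^sup>*"
proof
  assume to_Snk: "(Vert v, Snk) \<in> res\<^sup>*"
  from Vert_reachable_from_terminal[OF \<open>v \<in> V\<close>] show False
  proof
    assume "(Src, Vert v) \<in> res\<^sup>*"
    with to_Snk Src_not_reaches_Snk show False
      by (meson rtrancl_trans)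
  next
    assume "(Snk, Vert v) \<in> res\<^sup>*"
    with to_Snk have "Vert v \<in> scc Snk"
      by (simp add: in_scc_ofI)
    have "C = scc (Vert v)"
      using assms by (simp add: nontrivial_def SCCs_eq_scc_of)
    also from \<open>Vert v \<in> scc Snk\<close> have "\<dots> = scc Snk"
      by (rule scc_of_eq)
    finally have "Snk \<in> C"
      by (simp add: scc_of_def)
    with assms show False
      by (simp add: nontrivial_def)
  qed
qed

lemma nontrivial_pred_of_Vert_free_SCC:
  assumes C0: "nontrivial V E h f C0" "meets_V V C0"
    and C: "nontrivial V E h f C" "\<not> meets_V V C"
    and "(C0, C') \<in> cond\<^sup>+" "(C', C) \<in> cond"
  shows "nontrivial V E h f C'"
proof -
  have "Src \<notin> C'"
  proof
    assume "Src \<in> C'"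
    obtain L where "Lam L \<in> C"
      using C by (rule Vert_free_nontrivial_SCC)
    with \<open>Src \<in> C'\<close> \<open>(C', C) \<in> cond\<close> C show False
      using cond_reach Src_not_reaches_Vert_free_SCC by blast
  qed
  moreover have "Snk \<notin> C'"
  proof
    assume "Snk \<in> C'"
    obtain v where "v \<in> V" "Vert v \<in> C0"
      using C0(2) by (auto simp: meets_V_def)
    with \<open>Snk \<in> C'\<close> \<open>(C0, C') \<in> cond\<^sup>+\<close> C0(1) show False
      using trancl_cond_reach Vert_in_nontrivial_SCC_not_reaches_Snk by blast
  qed
  moreover have "C' \<in> SCCs V E h f"
    using \<open>(C', C) \<in> cond\<close> by (simp add: cond_arcs_def)
  ultimately show ?thesis
    by (simp add: nontrivial_def)
qed

end

theorem lemma8: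
  fixes V :: "'v set" and E :: "'v set set" and h :: nat
    and f :: "'v node \<Rightarrow> 'v node \<Rightarrow> real"
  assumes "simple_graph V E"
    and "h \<ge> 2"
    and "\<forall>v\<in>V. \<exists>K. is_hclique V E h K \<and> v \<in> K"
    and "is_max_flow V E h f"
  shows "bij_betw (\<lambda>\<C>. \<C> \<union> des_set V E h f \<C>)
           {\<C>. independent_set V E h f \<C>} {\<C>. d_closed V E h f \<C>}"
proof -
  interpret clique_flow_network V E h f
    using assms by unfold_locales
  interpret component_dag "cond_arcs V E h f" "nontrivial V E h f" "meets_V V" "des V E h f"
  proof
    show "finite (Collect (nontrivial V E h f))"
      using finite_SCCs by (rule finite_subset[rotated]) (auto simp: nontrivial_def)
  qed (auto simp: des_def acyclic_cond intro: nontrivial_pred_of_Vert_free_SCC)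
  have "independent_set V E h f = independent" "d_closed V E h f = closed"
    by (simp_all add: fun_eq_iff independent_set_def independent_def d_closed_def closed_def des_set_def)
  then show ?thesis
    using bij_betw_independent_closed by (simp add: des_set_def)
qed

end
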